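(* Let $G=(V,E)$ be a simple graph and $v\in V$ with degree $d(v)$. Then $$P(\mathcal{H}_{\bullet G},\lambda)=(\lambda-1)P(\mathcal{H}_{\bullet(G-\{v\})},\lambda)+(\lambda-1)^{d(v)}P(\mathcal{H}_{\bullet(G-N[v])},\lambda),$$ where $N[v]$ is the closed neighbourhood of $v$ and $G-S$ denotes the graph obtained by deleting the vertex set $S$.
   Context: A hypergraph $\mathcal{H}=(\mathcal{V},\mathcal{E})$ consists of a finite vertex set $\mathcal{V}$ and a set $\mathcal{E}$ of subsets of $\mathcal{V}$, each of size at least $1$, called edges. For a positive integer $\lambda$, a weak proper $\lambda$-colouring of $\mathcal{H}$ is a map $\phi:\mathcal{V}\to\{1,\dots,\lambda\}$ such that $|\{\phi(v):v\in e\}|>1$ for every $e\in\mathcal{E}$. $P(\mathcal{H},\lambda)$ denotes the number of weak proper $\lambda$-colourings; it is a polynomial in $\lambda$. For a simple graph $G=(V,E)$ (possibly with empty vertex set), $\mathcal{H}_{\bullet G}$ is the hypergraph with vertex set $V\cup\{w\}$, $w\notin V$ a new vertex, and edge set $\{\{u,v,w\}:uv\in E\}$. *)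

theory Defs
  imports Main "HOL-Library.FuncSet"
begin

definition simple_graph :: "'a set \<Rightarrow> 'a set set \<Rightarrow> bool" where
  "simple_graph V E \<longleftrightarrow> finite V \<and> (\<forall>e\<in>E. e \<subseteq> V \<and> card e = 2)"

definition weak_colourings :: "'b set \<Rightarrow> 'b set set \<Rightarrow> nat \<Rightarrow> ('b \<Rightarrow> nat) set" where
  "weak_colourings Vh Eh lam =
     {\<phi>. \<phi> \<in> Vh \<rightarrow>\<^sub>E {1..lam} \<and> (\<forall>e\<in>Eh. card (\<phi> ` e) > 1)}"

definition hchrom :: "'b set \<Rightarrow> 'b set set \<Rightarrow> nat \<Rightarrow> nat" where
  "hchrom Vh Eh lam = card (weak_colourings Vh Eh lam)"

text \<open>H_{bullet G}: vertices Some ` V plus the new vertex w = None;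
  edges {u,v,w} for every edge uv of G.\<close>
definition hbullet_V :: "'a set \<Rightarrow> 'a option set" where
  "hbullet_V V = Some ` V \<union> {None}"

definition hbullet_E :: "'a set set \<Rightarrow> 'a option set set" where
  "hbullet_E E = (\<lambda>e. insert None (Some ` e)) ` E"

definition P_bullet :: "'a set \<Rightarrow> 'a set set \<Rightarrow> nat \<Rightarrow> nat" where
  "P_bullet V E lam = hchrom (hbullet_V V) (hbullet_E E) lam"

definition del_V :: "'a set \<Rightarrow> 'a set \<Rightarrow> 'a set" where
  "del_V V S = V - S"

definition del_E :: "'a set set \<Rightarrow> 'a set \<Rightarrow> 'a set set" where
  "del_E E S = {e \<in> E. e \<inter> S = {}}"

definition degree :: "'a set set \<Rightarrow> 'a \<Rightarrow> nat" where
  "degree E v = card {e \<in> E. v \<in> e}"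

definition closed_nbhd :: "'a set set \<Rightarrow> 'a \<Rightarrow> 'a set" where
  "closed_nbhd E v = insert v {u. {u, v} \<in> E}"

end

theory Submission imports Defs begin

text \<open>Split the weak colourings \<phi> of \<open>H\<^sub>\<bullet>G\<close> by whether \<open>v\<close> gets the colour of the apex \<open>w\<close>.
  If \<open>\<phi> v \<noteq> \<phi> w\<close>, every edge \<open>{u, v, w}\<close> is already non-monochromatic, so \<phi> is an arbitrary
  weak colouring of \<open>H\<^sub>\<bullet>(G - v)\<close> together with one of \<open>\<lambda> - 1\<close> colours for \<open>v\<close>.
  If \<open>\<phi> v = \<phi> w\<close>, the edge \<open>{u, v, w}\<close> forces \<open>\<phi> u \<noteq> \<phi> w\<close> for each neighbour \<open>u\<close>, which already
  settles every edge meeting \<open>N[v]\<close>; so \<phi> is a weak colouring of \<open>H\<^sub>\<bullet>(G - N[v])\<close> together with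
  \<open>\<lambda> - 1\<close> choices for each of the \<open>d(v)\<close> neighbours.\<close>

lemma card_image_gt_1_iff:
  assumes "finite S" and "a \<in> S"
  shows "1 < card (f ` S) \<longleftrightarrow> (\<exists>x\<in>S. f x \<noteq> f a)"
proof -
  have "\<not> 1 < card (f ` S) \<longleftrightarrow> (\<forall>y\<in>f ` S. \<forall>z\<in>f ` S. y = z)"
    using assms(1) by (simp add: not_less card_le_Suc0_iff_eq)
  also have "\<dots> \<longleftrightarrow> (\<forall>x\<in>S. f x = f a)"
    using assms(2) by (metis image_iff)
  finally show ?thesis by blast
qed

lemma card_dependent_extensions:
  assumes disj: "A \<inter> X = {}" and "finite X" and "finite T" and T_ext: "T \<subseteq> extensional A"
    and "\<And>\<psi> x. \<psi> \<in> T \<Longrightarrow> x \<in> X \<Longrightarrow> finite (D \<psi> x)"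
    and "\<And>\<psi> x. \<psi> \<in> T \<Longrightarrow> x \<in> X \<Longrightarrow> card (D \<psi> x) = k x"
  shows "card {\<phi> \<in> extensional (A \<union> X). restrict \<phi> A \<in> T \<and> (\<forall>x\<in>X. \<phi> x \<in> D (restrict \<phi> A) x)}
           = card T * (\<Prod>x\<in>X. k x)"
    (is "card ?S = _")
proof -
  let ?split = "\<lambda>\<phi>. (restrict \<phi> A, restrict \<phi> X)"
  let ?merge = "\<lambda>(\<psi>, g) x. if x \<in> A then \<psi> x else g x"
  have "bij_betw ?split ?S (Sigma T (\<lambda>\<psi>. PiE X (D \<psi>)))"
  proof (rule bij_betwI[where g = ?merge])
    have merge_on_A: "restrict (?merge (\<psi>, g)) A = \<psi>" if "\<psi> \<in> T" for \<psi> g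
      using that T_ext by (auto simp: extensional_def fun_eq_iff)
    have merge_on_X: "restrict (?merge (\<psi>, g)) X = g" if "g \<in> PiE X (D \<psi>)" for \<psi> g
      using that disj by (auto simp: PiE_iff extensional_def fun_eq_iff)
    show "?merge \<in> Sigma T (\<lambda>\<psi>. PiE X (D \<psi>)) \<rightarrow> ?S"
    proof
      fix y assume "y \<in> Sigma T (\<lambda>\<psi>. PiE X (D \<psi>))"
      then obtain \<psi> g where y: "y = (\<psi>, g)" "\<psi> \<in> T" "g \<in> PiE X (D \<psi>)" by blast
      then show "?merge y \<in> ?S"
        using merge_on_A disj by (auto simp: PiE_iff extensional_def)
    qed
    show "?merge (?split \<phi>) = \<phi>" if "\<phi> \<in> ?S" for \<phi>
      using that by (auto simp: extensional_def)
    show "?split (?merge y) = y" if "y \<in> Sigma T (\<lambda>\<psi>. PiE X (D \<psi>))" for y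
      using that merge_on_A merge_on_X by auto
  qed auto
  then have "card ?S = card (Sigma T (\<lambda>\<psi>. PiE X (D \<psi>)))"
    by (rule bij_betw_same_card)
  also have "\<dots> = (\<Sum>\<psi>\<in>T. \<Prod>x\<in>X. k x)"
    using assms by (simp add: card_SigmaI finite_PiE card_PiE)
  finally show ?thesis by simp
qed

lemma finite_weak_colourings: "finite Vh \<Longrightarrow> finite (weak_colourings Vh Eh lam)"
  unfolding weak_colourings_def by (rule finite_subset[OF _ finite_PiE[of Vh "\<lambda>_. {1..lam}"]]) auto

lemma weak_colourings_bullet_iff:
  assumes "\<forall>e\<in>E. finite e"
  shows "\<phi> \<in> weak_colourings (hbullet_V V) (hbullet_E E) lam \<longleftrightarrow>
           \<phi> \<in> hbullet_V V \<rightarrow>\<^sub>E {1..lam} \<and> (\<forall>e\<in>E. \<exists>x\<in>e. \<phi> (Some x) \<noteq> \<phi> None)"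
proof -
  have "1 < card (\<phi> ` insert None (Some ` e)) \<longleftrightarrow> (\<exists>x\<in>e. \<phi> (Some x) \<noteq> \<phi> None)"
    if "e \<in> E" for e
    using card_image_gt_1_iff[of "insert None (Some ` e)" None \<phi>] assms that by auto
  then show ?thesis
    by (auto simp: weak_colourings_def hbullet_E_def)
qed

lemma restrict_in_weak_colourings_bullet_iff:
  assumes "\<forall>e\<in>E. e \<subseteq> V \<and> finite e"
  shows "restrict \<phi> (hbullet_V V) \<in> weak_colourings (hbullet_V V) (hbullet_E E) lam \<longleftrightarrow>
           (\<forall>x\<in>hbullet_V V. \<phi> x \<in> {1..lam}) \<and> (\<forall>e\<in>E. \<exists>x\<in>e. \<phi> (Some x) \<noteq> \<phi> None)"
proof -
  have "restrict \<phi> (hbullet_V V) (Some x) = \<phi> (Some x)" if "x \<in> e" "e \<in> E" for x e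
    using that assms by (auto simp: hbullet_V_def)
  moreover have "restrict \<phi> (hbullet_V V) None = \<phi> None"
    by (simp add: hbullet_V_def)
  ultimately show ?thesis
    using assms by (simp add: weak_colourings_bullet_iff PiE_iff)
qed

lemma simple_graph_del_E_edges:
  "simple_graph V E \<Longrightarrow> \<forall>e\<in>del_E E S. e \<subseteq> V - S \<and> finite e"
  by (auto simp: simple_graph_def del_E_def card_ge_0_finite)

lemma card_weak_colourings_bullet_apex_differs:
  assumes G: "simple_graph V E" and "v \<in> V"
  shows "card {\<phi> \<in> weak_colourings (hbullet_V V) (hbullet_E E) lam. \<phi> (Some v) \<noteq> \<phi> None}
           = P_bullet (del_V V {v}) (del_E E {v}) lam * (lam - 1)"
proof -
  let ?A = "hbullet_V (V - {v})"
  let ?T = "weak_colourings ?A (hbullet_E (del_E E {v})) lam"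
  have edges: "\<forall>e\<in>E. e \<subseteq> V \<and> finite e" and fin_V: "finite V"
    using G by (auto simp: simple_graph_def card_ge_0_finite)
  have A: "?A \<union> {Some v} = hbullet_V V" "None \<in> ?A" "Some v \<notin> ?A"
    using \<open>v \<in> V\<close> by (auto simp: hbullet_V_def)
  have "{\<phi> \<in> weak_colourings (hbullet_V V) (hbullet_E E) lam. \<phi> (Some v) \<noteq> \<phi> None}
      = {\<phi> \<in> extensional (?A \<union> {Some v}). restrict \<phi> ?A \<in> ?T \<and>
           (\<forall>x\<in>{Some v}. \<phi> x \<in> {1..lam} - {restrict \<phi> ?A None})}"
    (is "?S = ?R")
  proof (rule set_eqI)
    fix \<phi> :: "'a option \<Rightarrow> nat"
    have S_iff: "\<phi> \<in> ?S \<longleftrightarrow> \<phi> \<in> extensional (hbullet_V V) \<and> (\<forall>x\<in>hbullet_V V. \<phi> x \<in> {1..lam}) \<and>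
        (\<forall>e\<in>E. \<exists>x\<in>e. \<phi> (Some x) \<noteq> \<phi> None) \<and> \<phi> (Some v) \<noteq> \<phi> None"
      using edges by (auto simp: weak_colourings_bullet_iff PiE_iff)
    have R_iff: "\<phi> \<in> ?R \<longleftrightarrow> \<phi> \<in> extensional (hbullet_V V) \<and> (\<forall>x\<in>?A. \<phi> x \<in> {1..lam}) \<and>
        (\<forall>e\<in>del_E E {v}. \<exists>x\<in>e. \<phi> (Some x) \<noteq> \<phi> None) \<and> \<phi> (Some v) \<in> {1..lam} - {\<phi> None}"
      using A simple_graph_del_E_edges[OF G, of "{v}"]
      by (simp add: restrict_in_weak_colourings_bullet_iff)
    have range_iff: "(\<forall>x\<in>hbullet_V V. \<phi> x \<in> {1..lam}) \<longleftrightarrow>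
                   (\<forall>x\<in>?A. \<phi> x \<in> {1..lam}) \<and> \<phi> (Some v) \<in> {1..lam}"
      using A(1) by blast
    show "\<phi> \<in> ?S \<longleftrightarrow> \<phi> \<in> ?R"
    proof (cases "\<phi> (Some v) = \<phi> None")
      case False
      then have edges_iff: "(\<forall>e\<in>E. \<exists>x\<in>e. \<phi> (Some x) \<noteq> \<phi> None) \<longleftrightarrow>
          (\<forall>e\<in>del_E E {v}. \<exists>x\<in>e. \<phi> (Some x) \<noteq> \<phi> None)"
        by (auto simp: del_E_def)
      show ?thesis
        unfolding S_iff R_iff range_iff edges_iff using False by auto
    qed (use S_iff R_iff in blast)
  qed
  also have "card \<dots> = card ?T * (\<Prod>x\<in>{Some v}. lam - 1)"
  proof (rule card_dependent_extensions)
    show "finite ?T"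
      using fin_V by (intro finite_weak_colourings) (simp add: hbullet_V_def)
    show "card ({1..lam} - {\<psi> None}) = lam - 1" if "\<psi> \<in> ?T" for \<psi>
      using that A simple_graph_del_E_edges[OF G, of "{v}"]
      by (simp add: weak_colourings_bullet_iff PiE_iff)
  qed (use A in \<open>auto simp: weak_colourings_def PiE_iff\<close>)
  finally show ?thesis by (simp add: P_bullet_def hchrom_def del_V_def)
qed

lemma degree_eq_card_neighbours:
  assumes "\<forall>e\<in>E. card e = 2"
  shows "degree E v = card {u. {u, v} \<in> E}"
proof -
  have "inj_on (\<lambda>u. {u, v}) {u. {u, v} \<in> E}"
    using assms by (auto simp: inj_on_def doubleton_eq_iff)
  moreover have "{e \<in> E. v \<in> e} = (\<lambda>u. {u, v}) ` {u. {u, v} \<in> E}"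
  proof (intro equalityI subsetI)
    fix e assume e: "e \<in> {e \<in> E. v \<in> e}"
    then obtain a b where "e = {a, b}"
      using assms by (auto simp: card_2_iff)
    with e obtain u where "e = {u, v}" by blast
    with e show "e \<in> (\<lambda>u. {u, v}) ` {u. {u, v} \<in> E}" by blast
  qed auto
  ultimately show ?thesis
    by (simp add: degree_def card_image)
qed

lemma ball_edges_bex_iff_del_closed_nbhd:
  assumes "\<forall>e\<in>E. card e = 2" and "\<not> P v"
  shows "(\<forall>e\<in>E. \<exists>x\<in>e. P x) \<longleftrightarrow>
           (\<forall>e\<in>del_E E (closed_nbhd E v). \<exists>x\<in>e. P x) \<and> (\<forall>u. {u, v} \<in> E \<longrightarrow> P u)"
proof
  assume all: "\<forall>e\<in>E. \<exists>x\<in>e. P x"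
  then show "(\<forall>e\<in>del_E E (closed_nbhd E v). \<exists>x\<in>e. P x) \<and> (\<forall>u. {u, v} \<in> E \<longrightarrow> P u)"
    using \<open>\<not> P v\<close> by (fastforce simp: del_E_def)
next
  assume "(\<forall>e\<in>del_E E (closed_nbhd E v). \<exists>x\<in>e. P x) \<and> (\<forall>u. {u, v} \<in> E \<longrightarrow> P u)"
  then have far: "\<forall>e\<in>del_E E (closed_nbhd E v). \<exists>x\<in>e. P x" and near: "\<And>u. {u, v} \<in> E \<Longrightarrow> P u"
    by blast+
  show "\<forall>e\<in>E. \<exists>x\<in>e. P x"
  proof
    fix e assume e: "e \<in> E"
    show "\<exists>x\<in>e. P x"
    proof (cases "e \<inter> closed_nbhd E v = {}")
      case True
      then show ?thesis using far e by (simp add: del_E_def)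
    next
      case False
      then obtain y where y: "y \<in> e" "y = v \<or> {y, v} \<in> E"
        by (auto simp: closed_nbhd_def)
      obtain a b where "e = {a, b}"
        using assms(1) e by (auto simp: card_2_iff)
      then have "\<exists>u\<in>e. {u, v} \<in> E"
        using y e by (auto simp: insert_commute)
      then show ?thesis using near by blast
    qed
  qed
qed

lemma card_weak_colourings_bullet_apex_agrees:
  assumes G: "simple_graph V E" and "v \<in> V"
  shows "card {\<phi> \<in> weak_colourings (hbullet_V V) (hbullet_E E) lam. \<phi> (Some v) = \<phi> None}
           = P_bullet (del_V V (closed_nbhd E v)) (del_E E (closed_nbhd E v)) lam * (lam - 1) ^ degree E v"
proof -
  define N where "N = {u. {u, v} \<in> E}"
  define C where "C = insert v N"
  let ?A = "hbullet_V (V - C)"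
  let ?T = "weak_colourings ?A (hbullet_E (del_E E C)) lam"
  let ?D = "\<lambda>\<psi> x. if x = Some v then {\<psi> None} else {1..lam} - {\<psi> None}"
  have edges: "\<forall>e\<in>E. e \<subseteq> V \<and> finite e" "\<forall>e\<in>E. card e = 2" and fin_V: "finite V"
    using G by (auto simp: simple_graph_def card_ge_0_finite)
  have "v \<notin> N" "N \<subseteq> V"
    using edges by (auto simp: N_def)
  then have V_split: "hbullet_V V = insert (Some v) (?A \<union> Some ` N)"
    and A: "None \<in> ?A" "\<forall>x\<in>C. Some x \<notin> ?A"
    using \<open>v \<in> V\<close> by (auto simp: hbullet_V_def C_def)
  have "{\<phi> \<in> weak_colourings (hbullet_V V) (hbullet_E E) lam. \<phi> (Some v) = \<phi> None}
      = {\<phi> \<in> extensional (?A \<union> Some ` C). restrict \<phi> ?A \<in> ?T \<and>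
           (\<forall>x\<in>Some ` C. \<phi> x \<in> ?D (restrict \<phi> ?A) x)}"
    (is "?S = ?R")
  proof (rule set_eqI)
    fix \<phi> :: "'a option \<Rightarrow> nat"
    have S_iff: "\<phi> \<in> ?S \<longleftrightarrow> \<phi> \<in> extensional (hbullet_V V) \<and> (\<forall>x\<in>hbullet_V V. \<phi> x \<in> {1..lam}) \<and>
        (\<forall>e\<in>E. \<exists>x\<in>e. \<phi> (Some x) \<noteq> \<phi> None) \<and> \<phi> (Some v) = \<phi> None"
      using edges by (auto simp: weak_colourings_bullet_iff PiE_iff)
    have R_iff: "\<phi> \<in> ?R \<longleftrightarrow> \<phi> \<in> extensional (hbullet_V V) \<and> (\<forall>x\<in>?A. \<phi> x \<in> {1..lam}) \<and>
        (\<forall>e\<in>del_E E C. \<exists>x\<in>e. \<phi> (Some x) \<noteq> \<phi> None) \<and> \<phi> (Some v) = \<phi> None \<and>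
        (\<forall>u\<in>N. \<phi> (Some u) \<in> {1..lam} - {\<phi> None})"
      using A simple_graph_del_E_edges[OF G, of C] \<open>v \<notin> N\<close>
      by (auto simp: restrict_in_weak_colourings_bullet_iff V_split C_def)
    show "\<phi> \<in> ?S \<longleftrightarrow> \<phi> \<in> ?R"
    proof (cases "\<phi> (Some v) = \<phi> None")
      case True
      have range_iff: "(\<forall>x\<in>hbullet_V V. \<phi> x \<in> {1..lam}) \<longleftrightarrow>
              (\<forall>x\<in>?A. \<phi> x \<in> {1..lam}) \<and> (\<forall>u\<in>N. \<phi> (Some u) \<in> {1..lam})"
        unfolding V_split using A(1) True by auto
      have edges_iff: "(\<forall>e\<in>E. \<exists>x\<in>e. \<phi> (Some x) \<noteq> \<phi> None) \<longleftrightarrow>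
          (\<forall>e\<in>del_E E C. \<exists>x\<in>e. \<phi> (Some x) \<noteq> \<phi> None) \<and> (\<forall>u\<in>N. \<phi> (Some u) \<noteq> \<phi> None)"
        using ball_edges_bex_iff_del_closed_nbhd[OF edges(2), of "\<lambda>x. \<phi> (Some x) \<noteq> \<phi> None" v] True
        by (simp add: closed_nbhd_def C_def N_def)
      show ?thesis
        unfolding S_iff R_iff range_iff edges_iff using True by auto
    qed (use S_iff R_iff in blast)
  qed
  also have "card \<dots> = card ?T * (\<Prod>x\<in>Some ` C. if x = Some v then 1 else lam - 1)"
  proof (rule card_dependent_extensions)
    show "finite ?T"
      using fin_V by (intro finite_weak_colourings) (simp add: hbullet_V_def)
    show "finite (Some ` C)"
      using \<open>N \<subseteq> V\<close> fin_V by (auto simp: C_def intro: finite_subset)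
    show "card (?D \<psi> x) = (if x = Some v then 1 else lam - 1)" if "\<psi> \<in> ?T" for \<psi> x
      using that A simple_graph_del_E_edges[OF G, of C]
      by (simp add: weak_colourings_bullet_iff PiE_iff)
  qed (use A in \<open>auto simp: weak_colourings_def PiE_iff\<close>)
  also have "(\<Prod>x\<in>Some ` C. if x = Some v then 1 else lam - 1) = (lam - 1) ^ degree E v"
  proof -
    have "finite N"
      using \<open>N \<subseteq> V\<close> fin_V by (rule finite_subset)
    have "(\<Prod>x\<in>Some ` N. if x = Some v then 1 else lam - 1) = (\<Prod>x\<in>Some ` N. lam - 1)"
      by (rule prod.cong) (use \<open>v \<notin> N\<close> in auto)
    then have "(\<Prod>x\<in>Some ` C. if x = Some v then 1 else lam - 1) = (lam - 1) ^ card N"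
      using \<open>finite N\<close> \<open>v \<notin> N\<close> by (simp add: C_def image_iff card_image)
    then show ?thesis
      using degree_eq_card_neighbours[OF edges(2)] by (simp add: N_def)
  qed
  finally show ?thesis
    by (simp add: P_bullet_def hchrom_def del_V_def closed_nbhd_def C_def N_def)
qed

theorem proposition3:
  fixes V :: "'a set" and E :: "'a set set" and v :: 'a and lam :: nat
  assumes "simple_graph V E" and "v \<in> V" and "lam \<ge> 1"
  shows "int (P_bullet V E lam) =
           (int lam - 1) * int (P_bullet (del_V V {v}) (del_E E {v}) lam)
         + (int lam - 1) ^ degree E v
             * int (P_bullet (del_V V (closed_nbhd E v)) (del_E E (closed_nbhd E v)) lam)"
proof -
  let ?W = "weak_colourings (hbullet_V V) (hbullet_E E) lam"
  have "finite ?W"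
    using assms(1) by (intro finite_weak_colourings) (simp add: simple_graph_def hbullet_V_def)
  then have "card ?W = card {\<phi> \<in> ?W. \<phi> (Some v) \<noteq> \<phi> None} + card {\<phi> \<in> ?W. \<phi> (Some v) = \<phi> None}"
    using card_Int_Diff[of ?W "{\<phi>. \<phi> (Some v) \<noteq> \<phi> None}"] by (simp add: Collect_conj_eq Int_commute set_diff_eq)
  also have "\<dots> = P_bullet (del_V V {v}) (del_E E {v}) lam * (lam - 1)
      + P_bullet (del_V V (closed_nbhd E v)) (del_E E (closed_nbhd E v)) lam * (lam - 1) ^ degree E v"
    using assms(1,2)
    by (simp add: card_weak_colourings_bullet_apex_differs card_weak_colourings_bullet_apex_agrees)
  finally have "int (P_bullet V E lam) = int (P_bullet (del_V V {v}) (del_E E {v}) lam) * int (lam - 1)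
      + int (P_bullet (del_V V (closed_nbhd E v)) (del_E E (closed_nbhd E v)) lam) * int (lam - 1) ^ degree E v"
    by (simp only: P_bullet_def hchrom_def of_nat_add of_nat_mult of_nat_power)
  then show ?thesis
    using assms(3) by (simp add: of_nat_diff algebra_simps)
qed

end
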